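(* Let $\{F_n\}_{n\geq 0}$ be a sequence of positive integers with $F_0=1$, and let $\Pi$ be the cobweb poset it determines. Let $\mu$ denote the M\"obius function of $\Pi$, and let $0=\langle 1,0\rangle$ be its unique minimal element. For $k\geq 0$ define the Whitney number of the first kind $w_k(\Pi)=\sum_{x\in\Pi,\ r(x)=k}\mu(0,x)$. Then $$w_0(\Pi)=1,\qquad w_k(\Pi)=F_k\cdot(-1)^k\prod_{i=1}^{k-1}(F_i-1)\quad (k>0).$$ The same formulas hold for the Whitney numbers of the first kind $w_k(P_n)=\sum_{x\in P_n,\ r(x)=k}\mu_{P_n}(0,x)$ of every finite cobweb subposet $P_n$, $n\geq 0$, for $0\leq k\leq n$.
   Context: Cobweb poset: given the sequence $\{F_n\}_{n\ge 0}$, for $s\geq 0$ let the $s$-th level be $\Phi_s=\{\langle j,s\rangle : 1\leq j\leq F_s\}$, and let $V=\bigcup_{s\geq 0}\Phi_s$. The cobweb poset is $\Pi=(V,\leq)$ where for $x=\langle s,t\rangle$, $y=\langle u,v\rangle$ one has $x\leq y$ iff ($t<v$) or ($t=v$ and $s=u$). Its rank function is $r(x)=s$ for $x\in\Phi_s$; $\langle 1,0\rangle$ is its unique minimal element. For $n\geq 0$ the finite cobweb subposet $P_n$ is $V_n=\bigcup_{0\leq s\leq n}\Phi_s$ with the order induced from $\Pi$. The empty product (for $k=1$) equals $1$. *)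

theory Defs
  imports Main
begin

definition mobius :: "'a set \<Rightarrow> ('a \<Rightarrow> 'a \<Rightarrow> bool) \<Rightarrow> 'a \<Rightarrow> 'a \<Rightarrow> int" where
  "mobius V le = (THE m.
      (\<forall>x y. (x \<notin> V \<or> y \<notin> V) \<longrightarrow> m x y = 0) \<and>
      (\<forall>x\<in>V. \<forall>y\<in>V. m x y =
         (if x = y then 1
          else if le x y then - (\<Sum>z\<in>{z\<in>V. le x z \<and> le z y \<and> z \<noteq> y}. m x z)
          else 0)))"

text \<open>Cobweb poset: element <j,s> is the pair (j,s), 1 <= j <= F s, at level s.\<close>
definition cobweb_V :: "(nat \<Rightarrow> nat) \<Rightarrow> (nat \<times> nat) set" where
  "cobweb_V F = {(j, s). 1 \<le> j \<and> j \<le> F s}"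

definition cobweb_le :: "nat \<times> nat \<Rightarrow> nat \<times> nat \<Rightarrow> bool" where
  "cobweb_le x y = (snd x < snd y \<or> (snd x = snd y \<and> fst x = fst y))"

definition cobweb_rank :: "nat \<times> nat \<Rightarrow> nat" where
  "cobweb_rank x = snd x"

definition cobweb_Vn :: "(nat \<Rightarrow> nat) \<Rightarrow> nat \<Rightarrow> (nat \<times> nat) set" where
  "cobweb_Vn F n = {x \<in> cobweb_V F. snd x \<le> n}"

definition whitney1 :: "(nat \<times> nat) set \<Rightarrow> nat \<Rightarrow> int" where
  "whitney1 V k = (\<Sum>x\<in>{x\<in>V. cobweb_rank x = k}. mobius V cobweb_le (1, 0) x)"

end

theory Submission
  imports Defs
begin

text \<open>Every element of rank \<open>s > 0\<close> lies above all elements of lower rank, and rank 0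
  consists of the minimum alone. So the Moebius recursion for \<open>\<mu>(0, y)\<close> sums over all
  elements of rank below \<open>r(y)\<close>, and its value depends only on the rank:
  \<open>\<mu>(0, y) = w (r y)\<close> with \<open>w 0 = 1\<close> and \<open>w k = - \<Sum>s<k. F s * w s\<close>. This recursion is
  solved by \<open>w k = (-1)^k \<Prod>i=1..k-1. (F i - 1)\<close>, as \<open>F 0 = 1\<close>. The argument only sees
  levels up to \<open>k\<close>, so it applies verbatim to every truncation \<open>P\<^sub>n\<close>.\<close>

lemma cobweb_le_rank_less: "cobweb_le x y \<Longrightarrow> x \<noteq> y \<Longrightarrow> snd x < snd y"
  by (auto simp: cobweb_le_def prod_eq_iff)

text \<open>The recursion defining \<open>mobius\<close> terminates because the cobweb order strictly raises the
  rank, so it can be realised by \<open>function\<close>; this pins down the \<open>THE\<close>.\<close>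

function cobweb_mu :: "(nat \<times> nat) set \<Rightarrow> nat \<times> nat \<Rightarrow> nat \<times> nat \<Rightarrow> int" where
  "cobweb_mu V x y =
    (if x \<notin> V \<or> y \<notin> V then 0
     else if x = y then 1
     else if cobweb_le x y
       then - (\<Sum>z\<in>{z\<in>V. cobweb_le x z \<and> cobweb_le z y \<and> z \<noteq> y}. cobweb_mu V x z)
     else 0)"
  by auto
termination
  by (relation "measure (\<lambda>(V, x, y). snd y)") (auto dest: cobweb_le_rank_less)

declare cobweb_mu.simps [simp del]

lemma mobius_cobweb_eq_cobweb_mu: "mobius V cobweb_le = cobweb_mu V"
  unfolding mobius_def
proof (rule the_equality, goal_cases)
  case 1
  show ?case
    by (auto simp: cobweb_mu.simps [of V])
next
  case (2 m)
  show ?case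
  proof (intro ext)
    fix x y
    show "m x y = cobweb_mu V x y"
    proof (induction "snd y" arbitrary: y rule: less_induct)
      case less
      have sums_eq: "(\<Sum>z\<in>{z\<in>V. cobweb_le x z \<and> cobweb_le z y \<and> z \<noteq> y}. m x z)
          = (\<Sum>z\<in>{z\<in>V. cobweb_le x z \<and> cobweb_le z y \<and> z \<noteq> y}. cobweb_mu V x z)"
        by (rule sum.cong) (auto intro: less cobweb_le_rank_less)
      show ?case
      proof (cases "x \<in> V \<and> y \<in> V")
        case True
        with 2 have "m x y = (if x = y then 1
            else if cobweb_le x y
              then - (\<Sum>z\<in>{z\<in>V. cobweb_le x z \<and> cobweb_le z y \<and> z \<noteq> y}. m x z)
            else 0)"
          by blast
        with sums_eq True show ?thesis
          by (simp add: cobweb_mu.simps [of V x y])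
      next
        case False
        with 2 have "m x y = 0"
          by blast
        with False show ?thesis
          by (simp add: cobweb_mu.simps [of V x y])
      qed
    qed
  qed
qed

definition whitney_weight :: "(nat \<Rightarrow> nat) \<Rightarrow> nat \<Rightarrow> int" where
  "whitney_weight F k = (-1) ^ k * (\<Prod>i\<in>{1..<k}. int (F i) - 1)"

lemma sum_weighted_whitney_weight:
  assumes "F 0 = 1" and "k \<ge> 1"
  shows "(\<Sum>s<k. int (F s) * whitney_weight F s) = - whitney_weight F k"
  using \<open>k \<ge> 1\<close>
proof (induction k rule: nat_induct_at_least)
  case base
  then show ?case using \<open>F 0 = 1\<close> by (simp add: whitney_weight_def)
next
  case (Suc k)
  have "(\<Sum>s<Suc k. int (F s) * whitney_weight F s)
      = - whitney_weight F k + int (F k) * whitney_weight F k"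
    using Suc by simp
  also have "\<dots> = - whitney_weight F (Suc k)"
    using Suc.hyps by (simp add: whitney_weight_def prod.atLeastLessThan_Suc algebra_simps)
  finally show ?case .
qed

text \<open>The hypothesis \<open>{x \<in> V. snd x \<le> K} = cobweb_Vn F K\<close> says that \<open>V\<close> coincides with the
  cobweb poset up to level \<open>K\<close>; it covers both \<open>\<Pi>\<close> and each \<open>P\<^sub>n\<close> (with \<open>K = n\<close>).\<close>

lemma cobweb_level_eq:
  assumes trunc: "{x \<in> V. snd x \<le> K} = cobweb_Vn F K" and "s \<le> K"
  shows "{x \<in> V. snd x = s} = (\<lambda>j. (j, s)) ` {1..F s}"
proof -
  have "{x \<in> V. snd x = s} = {x \<in> {x \<in> V. snd x \<le> K}. snd x = s}"
    using \<open>s \<le> K\<close> by auto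
  also have "\<dots> = {x \<in> cobweb_Vn F K. snd x = s}"
    by (simp only: trunc)
  also have "\<dots> = (\<lambda>j. (j, s)) ` {1..F s}"
    using \<open>s \<le> K\<close> by (auto simp: cobweb_Vn_def cobweb_V_def image_iff)
  finally show ?thesis .
qed

lemma sum_cobweb_level:
  assumes "{x \<in> V. snd x \<le> K} = cobweb_Vn F K" and "s \<le> K"
  shows "(\<Sum>x\<in>{x \<in> V. snd x = s}. f (snd x)) = int (F s) * f s"
  by (simp add: cobweb_level_eq [OF assms] sum.reindex inj_on_def)

lemma sum_cobweb_below_rank:
  assumes trunc: "{x \<in> V. snd x \<le> K} = cobweb_Vn F K" and "k \<le> K"
  shows "(\<Sum>x\<in>{x \<in> V. snd x < k}. f (snd x)) = (\<Sum>s<k. int (F s) * f s)"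
proof -
  have "{x \<in> V. snd x < k} = (\<Union>s<k. {x \<in> V. snd x = s})"
    by auto
  moreover have "finite {x \<in> V. snd x = s}" if "s < k" for s
    using cobweb_level_eq [OF trunc] that \<open>k \<le> K\<close> by simp
  ultimately have "(\<Sum>x\<in>{x \<in> V. snd x < k}. f (snd x))
      = (\<Sum>s<k. \<Sum>x\<in>{x \<in> V. snd x = s}. f (snd x))"
    by (simp only:) (rule sum.UNION_disjoint, auto)
  also have "\<dots> = (\<Sum>s<k. int (F s) * f s)"
  proof (rule sum.cong [OF refl])
    fix s
    assume "s \<in> {..<k}"
    with \<open>k \<le> K\<close> show "(\<Sum>x\<in>{x \<in> V. snd x = s}. f (snd x)) = int (F s) * f s"
      by (intro sum_cobweb_level [OF trunc]) simp
  qed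
  finally show ?thesis .
qed

lemma cobweb_rank_zero_iff:
  assumes trunc: "{x \<in> V. snd x \<le> K} = cobweb_Vn F K" and "F 0 = 1"
  shows "z \<in> V \<and> snd z = 0 \<longleftrightarrow> z = (1, 0)"
proof -
  have "z \<in> V \<and> snd z = 0 \<longleftrightarrow> z \<in> {x \<in> V. snd x \<le> K} \<and> snd z = 0"
    by auto
  also have "\<dots> \<longleftrightarrow> z \<in> cobweb_Vn F K \<and> snd z = 0"
    by (simp only: trunc)
  also have "\<dots> \<longleftrightarrow> z = (1, 0)"
    using \<open>F 0 = 1\<close> by (cases z) (auto simp: cobweb_Vn_def cobweb_V_def)
  finally show ?thesis .
qed

lemma mobius_cobweb_from_zero:
  assumes trunc: "{x \<in> V. snd x \<le> K} = cobweb_Vn F K" and "F 0 = 1"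
    and "y \<in> V" and "snd y \<le> K"
  shows "mobius V cobweb_le (1, 0) y = whitney_weight F (snd y)"
  using \<open>y \<in> V\<close> \<open>snd y \<le> K\<close>
proof (induction "snd y" arbitrary: y rule: less_induct)
  case less
  note rank_zero = cobweb_rank_zero_iff [OF trunc \<open>F 0 = 1\<close>]
  show ?case
  proof (cases "snd y = 0")
    case True
    with less.prems rank_zero [of y] have "y = (1, 0)"
      by simp
    with less.prems show ?thesis
      unfolding mobius_cobweb_eq_cobweb_mu by (subst cobweb_mu.simps) (simp add: whitney_weight_def)
  next
    case False
    have interval: "{z \<in> V. cobweb_le (1, 0) z \<and> cobweb_le z y \<and> z \<noteq> y} = {z \<in> V. snd z < snd y}"
      using False rank_zero by (auto simp: cobweb_le_def) (metis snd_conv)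
    have "mobius V cobweb_le (1, 0) y = - (\<Sum>z\<in>{z \<in> V. snd z < snd y}. mobius V cobweb_le (1, 0) z)"
    proof -
      have "(1, 0) \<noteq> y" "cobweb_le (1, 0) y"
        using False by (auto simp: cobweb_le_def)
      with rank_zero [of "(1, 0)"] less.prems interval show ?thesis
        unfolding mobius_cobweb_eq_cobweb_mu by (subst cobweb_mu.simps) simp
    qed
    also have "(\<Sum>z\<in>{z \<in> V. snd z < snd y}. mobius V cobweb_le (1, 0) z)
        = (\<Sum>z\<in>{z \<in> V. snd z < snd y}. whitney_weight F (snd z))"
      using less by (intro sum.cong) auto
    also have "\<dots> = (\<Sum>s<snd y. int (F s) * whitney_weight F s)"
      using sum_cobweb_below_rank [OF trunc] less.prems by simp
    also have "\<dots> = - whitney_weight F (snd y)"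
      using sum_weighted_whitney_weight [of F, OF \<open>F 0 = 1\<close>] False by simp
    finally show ?thesis by simp
  qed
qed

lemma whitney1_cobweb_eq:
  assumes trunc: "{x \<in> V. snd x \<le> K} = cobweb_Vn F K" and "F 0 = 1" and "k \<le> K"
  shows "whitney1 V k = int (F k) * whitney_weight F k"
proof -
  have "whitney1 V k = (\<Sum>x\<in>{x \<in> V. snd x = k}. whitney_weight F (snd x))"
    unfolding whitney1_def cobweb_rank_def
    using mobius_cobweb_from_zero [OF trunc \<open>F 0 = 1\<close>] \<open>k \<le> K\<close> by (intro sum.cong) auto
  also have "\<dots> = int (F k) * whitney_weight F k"
    by (rule sum_cobweb_level [OF trunc \<open>k \<le> K\<close>])
  finally show ?thesis .
qed

theorem mainTheorem1:
  fixes F :: "nat \<Rightarrow> nat"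
  assumes pos: "\<forall>n. F n > 0"
    and F0: "F 0 = 1"
  shows "whitney1 (cobweb_V F) 0 = 1
    \<and> (\<forall>k>0. whitney1 (cobweb_V F) k
              = int (F k) * (-1) ^ k * (\<Prod>i\<in>{1..<k}. int (F i) - 1))
    \<and> (\<forall>n. whitney1 (cobweb_Vn F n) 0 = 1
        \<and> (\<forall>k. 0 < k \<and> k \<le> n \<longrightarrow> whitney1 (cobweb_Vn F n) k
              = int (F k) * (-1) ^ k * (\<Prod>i\<in>{1..<k}. int (F i) - 1)))"
proof -
  have "{x \<in> cobweb_V F. snd x \<le> k} = cobweb_Vn F k" for k
    by (simp add: cobweb_Vn_def)
  note whitney_Pi = whitney1_cobweb_eq [OF this F0 order_refl]
  have "{x \<in> cobweb_Vn F n. snd x \<le> n} = cobweb_Vn F n" for n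
    by (auto simp: cobweb_Vn_def)
  note whitney_Pn = whitney1_cobweb_eq [OF this F0]
  show ?thesis
    using whitney_Pi whitney_Pn F0 by (auto simp: whitney_weight_def mult.assoc)
qed

end
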